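(* Let $P_0=P_0(q)=\sum_{j\ge1}(-1)^{j-1}(2j-1)q^{j(j-1)/2}$ and let $\Theta=q\frac{d}{dq}$. For every $m\ge1$, \[\Theta^m(P_0)=-3P_0P_m,\] where $P_m$ is a polynomial in $A_0,A_1,\dots,A_{m-1}$ with rational coefficients. Moreover $P_1=A_0$ and $P_{m+1}=\Theta(P_m)-3A_0P_m$ for $m\ge1$.
   Context: For $m\ge1$ let $\sigma(m)$ be the sum of positive divisors of $m$, and $A_i=A_i(q)=\sum_{m\ge1}m^i\sigma(m)q^m$ for $i\ge0$ (so $\Theta(A_i)=A_{i+1}$). Everything is regarded as power series in $q$ (equivalently, functions of $0<q<1$). *)

theory Defs
  imports "HOL-Computational_Algebra.Formal_Power_Series"
begin

definition sigma :: "nat \<Rightarrow> nat" where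
  "sigma m = (\<Sum>d\<in>{d. d dvd m}. d)"

definition A :: "nat \<Rightarrow> rat fps" where
  "A i = Abs_fps (\<lambda>m. if m = 0 then 0 else of_nat m ^ i * of_nat (sigma m))"

text \<open>Coefficient of q^n in P_0: (-1)^(j-1)(2j-1) if n = j(j-1)/2 with j >= 1
  (such j is unique and satisfies j <= n+1), else 0.\<close>
definition P0 :: "rat fps" where
  "P0 = Abs_fps (\<lambda>n. \<Sum>j\<in>{1..n+1}.
          if j * (j - 1) div 2 = n then (-1) ^ (j - 1) * of_nat (2 * j - 1) else 0)"

abbreviation Theta :: "rat fps \<Rightarrow> rat fps" where
  "Theta \<equiv> fps_XD"

inductive_set poly_in_A :: "nat \<Rightarrow> rat fps set" for m :: nat where
  const: "fps_const c \<in> poly_in_A m"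
| gen: "i < m \<Longrightarrow> A i \<in> poly_in_A m"
| add: "f \<in> poly_in_A m \<Longrightarrow> g \<in> poly_in_A m \<Longrightarrow> f + g \<in> poly_in_A m"
| mult: "f \<in> poly_in_A m \<Longrightarrow> g \<in> poly_in_A m \<Longrightarrow> f * g \<in> poly_in_A m"

end

(*
  By Jacobi's identity P0 is the cube of the Euler product (q;q)_oo, so its logarithmic
  derivative is -3 sum_i i q^i/(1 - q^i) = -3 A_0.  Everything else follows from the
  product rule for Theta and Theta A_i = A_(i+1).

  Jacobi's identity is only needed modulo q^(n+1), where (q;q)_oo may be replaced by
  (q;q)_n.  Expanding prod_(j<2n+1) (q^n - x q^j) by the q-binomial theorem and
  differentiating at x = 1 gives an alternating sum of Gaussian binomials [2n+1,k]_q equal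
  to (q;q)_n^2 up to sign and a power of q; multiplying by (q;q)_n, each [2n+1,k]_q (q;q)_n
  is 1 modulo a power of q high enough that only the partial theta series survives.
*)
theory Submission
  imports Defs "HOL-Computational_Algebra.Polynomial"
begin

unbundle fps_syntax

fun tri :: "nat \<Rightarrow> nat" where
  "tri 0 = 0"
| "tri (Suc j) = tri j + j"

lemma tri_add: "tri (a + b) = tri a + tri b + a * b"
  by (induction b) auto

lemma tri_double: "2 * tri j + j = j * j"
  by (induction j) auto

lemma tri_eq_div: "tri j = j * (j - 1) div 2"
proof -
  have "2 * tri j = j * (j - 1)"
    using tri_double[of j] by (cases j) simp_all
  then show ?thesis by simp
qed

lemma le_Suc_tri: "j \<le> Suc (tri j)"
  by (induction j) auto

definition q_pochhammer :: "'a::comm_ring_1 \<Rightarrow> nat \<Rightarrow> 'a" where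
  "q_pochhammer q n = (\<Prod>i<n. 1 - q ^ Suc i)"

lemma q_pochhammer_0 [simp]: "q_pochhammer q 0 = 1"
  by (simp add: q_pochhammer_def)

lemma q_pochhammer_Suc [simp]: "q_pochhammer q (Suc n) = q_pochhammer q n * (1 - q ^ Suc n)"
  by (simp add: q_pochhammer_def)

fun q_binomial :: "'a::comm_ring_1 \<Rightarrow> nat \<Rightarrow> nat \<Rightarrow> 'a" where
  "q_binomial q 0 k = (if k = 0 then 1 else 0)"
| "q_binomial q (Suc m) 0 = 1"
| "q_binomial q (Suc m) (Suc k) = q_binomial q m k + q ^ Suc k * q_binomial q m (Suc k)"

lemma q_binomial_eq_0: "m < k \<Longrightarrow> q_binomial q m k = 0"
  by (induction q m k rule: q_binomial.induct) auto

lemma q_binomial_0_right [simp]: "q_binomial q m 0 = 1"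
  by (cases m) auto

lemma q_binomial_diag [simp]: "q_binomial q m m = 1"
  by (induction m) (simp_all add: q_binomial_eq_0)

lemma q_binomial_const: "q_binomial [:c:] m k = [:q_binomial c m k:]"
  by (induction c m k rule: q_binomial.induct) (simp_all add: poly_const_pow)

lemma q_binomial_theorem:
  fixes a b q :: "'a::comm_ring_1"
  shows "(\<Prod>j<m. a + b * q ^ j) =
    (\<Sum>k\<le>m. q ^ tri k * q_binomial q m k * b ^ k * a ^ (m - k))"
proof (induction m arbitrary: b)
  case 0
  then show ?case by simp
next
  case (Suc m)
  define S1 where "S1 = (\<Sum>k\<le>m. q ^ tri (Suc k) * q_binomial q m k * b ^ Suc k * a ^ (m - k))"
  define S2 where "S2 = (\<Sum>k\<le>m. q ^ tri (Suc k) * (q ^ Suc k * q_binomial q m (Suc k)) *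
    b ^ Suc k * a ^ (m - k))"
  define g where "g k = q ^ (tri k + k) * q_binomial q m k * b ^ k * a ^ (Suc m - k)" for k
  have lhs: "(\<Prod>j<Suc m. a + b * q ^ j) = (a + b) * (\<Prod>j<m. a + (b * q) * q ^ j)"
    by (subst prod.lessThan_Suc_shift) (simp add: mult.assoc del: prod.lessThan_Suc)
  have rhs: "(\<Sum>k\<le>Suc m. q ^ tri k * q_binomial q (Suc m) k * b ^ k * a ^ (Suc m - k)) =
      a ^ Suc m + S1 + S2"
    unfolding S1_def S2_def sum.atMost_Suc_shift
    by (simp add: algebra_simps sum.distrib del: power_Suc sum.atMost_Suc)
  have b_part: "b * (\<Sum>k\<le>m. q ^ tri k * q_binomial q m k * (b * q) ^ k * a ^ (m - k)) = S1"
    unfolding S1_def sum_distrib_left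
    by (rule sum.cong) (simp_all add: power_add power_mult_distrib algebra_simps)
  have "a * (\<Sum>k\<le>m. q ^ tri k * q_binomial q m k * (b * q) ^ k * a ^ (m - k)) = (\<Sum>k\<le>m. g k)"
    unfolding g_def sum_distrib_left
    by (rule sum.cong) (simp_all add: power_add power_mult_distrib algebra_simps Suc_diff_le)
  also have "\<dots> = (\<Sum>k\<le>Suc m. g k)"
    by (simp add: g_def q_binomial_eq_0)
  also have "\<dots> = a ^ Suc m + S2"
    unfolding S2_def g_def sum.atMost_Suc_shift
    by (simp add: power_add mult_ac del: sum.atMost_Suc)
  finally have a_part:
    "a * (\<Sum>k\<le>m. q ^ tri k * q_binomial q m k * (b * q) ^ k * a ^ (m - k)) = a ^ Suc m + S2" .
  show ?case
    unfolding lhs Suc.IH[of "b * q"] rhs using a_part b_part by (simp add: algebra_simps)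
qed

lemma q_binomial_q_pochhammer:
  assumes "k \<le> m"
  shows "q_binomial q m k * q_pochhammer q k * q_pochhammer q (m - k) = q_pochhammer q m"
  using assms
proof (induction m arbitrary: k)
  case 0
  then show ?case by simp
next
  case (Suc m)
  show ?case
  proof (cases k)
    case 0
    then show ?thesis by simp
  next
    case (Suc l)
    show ?thesis
    proof (cases "l = m")
      case True
      then show ?thesis
        using Suc by (simp add: q_binomial_eq_0 algebra_simps)
    next
      case False
      with Suc Suc.prems have "l < m" by simp
      then have m_minus_l: "m - l = Suc (m - Suc l)"
        and q_powers: "q ^ Suc l * q ^ Suc (m - Suc l) = q ^ Suc m"
        by (simp_all flip: power_add del: power_Suc)
      have "q_binomial q (Suc m) k * q_pochhammer q k * q_pochhammer q (Suc m - k)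
          = q_binomial q m l * q_pochhammer q l * q_pochhammer q (m - l) * (1 - q ^ Suc l)
            + q ^ Suc l * (q_binomial q m (Suc l) * q_pochhammer q (Suc l) *
                q_pochhammer q (m - Suc l)) * (1 - q ^ Suc (m - Suc l))"
        using Suc m_minus_l by (simp add: algebra_simps)
      also have "\<dots> = q_pochhammer q m * (1 - q ^ Suc l)
          + q ^ Suc l * q_pochhammer q m * (1 - q ^ Suc (m - Suc l))"
        using Suc.IH[of l] Suc.IH[of "Suc l"] \<open>l < m\<close> by (simp del: q_pochhammer_Suc)
      also have "\<dots> = q_pochhammer q m * (1 - q ^ Suc l * q ^ Suc (m - Suc l))"
        by (simp add: algebra_simps)
      also have "\<dots> = q_pochhammer q (Suc m)"
        by (simp only: q_powers q_pochhammer_Suc)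
      finally show ?thesis .
    qed
  qed
qed

lemma prod_lessThan_add:
  fixes b :: nat
  shows "(\<Prod>j<a + b. f j) = (\<Prod>j<a. f j) * (\<Prod>i<b. f (a + i))"
  by (induction b) (simp_all add: mult.assoc)

lemma sum_lessThan_add:
  fixes b :: nat
  shows "(\<Sum>j<a + b. f j) = (\<Sum>j<a. f j) + (\<Sum>i<b. f (a + i))"
  by (induction b) (simp_all add: add.assoc)

section \<open>A finite form of Jacobi's identity\<close>

lemma prod_q_power_diff_low:
  "(\<Prod>j<n. q ^ n - q ^ j) = (-1) ^ n * q ^ tri n * q_pochhammer (q::'a::comm_ring_1) n"
proof -
  have "(\<Prod>j<n. q ^ n - q ^ j) = (\<Prod>j<n. - 1 * q ^ j * (1 - q ^ Suc (n - Suc j)))"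
    by (rule prod.cong) (simp_all add: algebra_simps Suc_diff_Suc flip: power_add)
  also have "\<dots> = (-1) ^ n * (\<Prod>j<n. q ^ j) * (\<Prod>j<n. 1 - q ^ Suc (n - Suc j))"
    by (simp only: prod.distrib) simp
  also have "(\<Prod>j<n. q ^ j) = q ^ tri n"
    by (induction n) (simp_all add: power_add)
  also have "(\<Prod>j<n. 1 - q ^ Suc (n - Suc j)) = q_pochhammer q n"
    unfolding q_pochhammer_def by (rule prod.nat_diff_reindex)
  finally show ?thesis .
qed

lemma prod_q_power_diff_high:
  "(\<Prod>i<n. q ^ n - q ^ Suc (n + i)) = q ^ (n * n) * q_pochhammer (q::'a::comm_ring_1) n"
proof -
  have "(\<Prod>i<n. q ^ n - q ^ Suc (n + i)) = (\<Prod>i<n. q ^ n * (1 - q ^ Suc i))"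
    by (rule prod.cong) (simp_all add: algebra_simps power_add)
  then show ?thesis
    by (simp add: prod.distrib q_pochhammer_def power_mult)
qed

text \<open>Both sides are the derivative at \<open>x = 1\<close> of \<open>\<Prod>j<2n+1. Q^n - x Q^j\<close>: the right
  one by the product rule, where only the vanishing factor \<open>j = n\<close> contributes, the left one
  from the q-binomial expansion.\<close>

lemma q_binomial_weighted_alternating_sum:
  fixes Q :: "'a::idom"
  shows "(\<Sum>k\<le>2*n+1. (-1) ^ k * of_nat k * Q ^ tri k * q_binomial Q (2*n+1) k * (Q ^ n) ^ (2*n+1-k))
    = - (Q ^ n) * ((-1) ^ n * Q ^ tri n * q_pochhammer Q n) * (Q ^ (n * n) * q_pochhammer Q n)"
proof -
  define m where "m = 2*n+1"
  define f where "f j = [:Q ^ n, - (Q ^ j):]" for j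
  define c where "c k = (-1) ^ k * Q ^ tri k * q_binomial Q m k * (Q ^ n) ^ (m - k)" for k
  have "(\<Prod>j<m. f j) = (\<Prod>j<m. [:Q ^ n:] + monom (-1) 1 * [:Q:] ^ j)"
    by (simp add: f_def monom_Suc monom_0 poly_const_pow)
  also have "\<dots> = (\<Sum>k\<le>m. monom (c k) k)"
    unfolding q_binomial_theorem
  proof (rule sum.cong)
    fix k
    show "[:Q:] ^ tri k * q_binomial [:Q:] m k * monom (- 1) 1 ^ k * [:Q ^ n:] ^ (m - k) = monom (c k) k"
      unfolding q_binomial_const poly_const_pow monom_power
      unfolding monom_0[symmetric] mult_monom
      by (simp add: c_def mult_ac)
  qed simp
  finally have expansion: "(\<Prod>j<m. f j) = (\<Sum>k\<le>m. monom (c k) k)" .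
  have split: "(\<Prod>j<m. f j) = f n * ((\<Prod>j<n. f j) * (\<Prod>i<n. f (Suc (n + i))))"
  proof -
    have "m = n + Suc n"
      by (simp add: m_def)
    then have "(\<Prod>j<m. f j) = (\<Prod>j<n. f j) * (\<Prod>i<Suc n. f (n + i))"
      by (simp only: prod_lessThan_add)
    also have "(\<Prod>i<Suc n. f (n + i)) = f n * (\<Prod>i<n. f (Suc (n + i)))"
      by (subst prod.lessThan_Suc_shift) simp
    finally show ?thesis
      by (simp only: mult_ac)
  qed
  have "poly (pderiv (\<Prod>j<m. f j)) 1 =
      - (Q ^ n) * ((\<Prod>j<n. Q ^ n - Q ^ j) * (\<Prod>i<n. Q ^ n - Q ^ Suc (n + i)))"
    unfolding split pderiv_mult by (simp add: f_def poly_prod pderiv_pCons)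
  moreover have "poly (pderiv (\<Sum>k\<le>m. monom (c k) k)) 1 = (\<Sum>k\<le>m. of_nat k * c k)"
    by (simp add: higher_pderiv_sum[of 1, simplified] poly_sum pderiv_monom poly_monom)
  ultimately have "(\<Sum>k\<le>m. of_nat k * c k) =
      - (Q ^ n) * ((-1) ^ n * Q ^ tri n * q_pochhammer Q n) * (Q ^ (n * n) * q_pochhammer Q n)"
    unfolding expansion prod_q_power_diff_low prod_q_power_diff_high by (simp only: mult.assoc)
  then show ?thesis
    unfolding m_def[symmetric] c_def by (simp add: mult_ac)
qed

definition theta_exponent :: "nat \<Rightarrow> nat \<Rightarrow> nat" where
  "theta_exponent n k = (if n < k then tri (k - n) else tri (n + 1 - k))"

lemma tri_add_mult_eq_theta_exponent:
  assumes "k \<le> 2*n+1"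
  shows "tri k + n * (2*n+1-k) = n + tri n + n*n + theta_exponent n k"
proof (cases "n < k")
  case True
  then obtain l where l: "k = n + Suc l"
    using less_imp_Suc_add by fastforce
  moreover obtain d where d: "n = l + d"
    using assms l le_Suc_ex by fastforce
  moreover have "n * Suc l + n * d = n + n * n"
    using d by (simp add: algebra_simps)
  ultimately show ?thesis
    using True tri_add[of n "Suc l"] by (simp add: theta_exponent_def)
next
  case False
  then obtain i where i: "n = k + i"
    using le_Suc_ex not_less by blast
  have "tri (k + Suc i) = tri k + tri (Suc i) + k * Suc i"
    by (rule tri_add)
  moreover have "2 * tri (Suc i) = i * Suc i"
    using tri_double[of "Suc i"] by simp
  moreover have "n * (n + Suc i) = n * n + k * Suc i + i * Suc i"
    using i by (simp add: algebra_simps)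
  ultimately show ?thesis
    using False i by (simp add: theta_exponent_def Suc_diff_le algebra_simps)
qed

lemma q_binomial_weighted_alternating_sum_reduced:
  fixes Q :: "'a::idom"
  assumes "Q \<noteq> 0"
  shows "(\<Sum>k\<le>2*n+1. (-1) ^ k * of_nat k * Q ^ theta_exponent n k * q_binomial Q (2*n+1) k)
    = - ((-1) ^ n) * q_pochhammer Q n ^ 2"
proof -
  define E where "E = n + tri n + n * n"
  have "Q ^ E * (\<Sum>k\<le>2*n+1. (-1) ^ k * of_nat k * Q ^ theta_exponent n k * q_binomial Q (2*n+1) k)
      = (\<Sum>k\<le>2*n+1. (-1) ^ k * of_nat k * Q ^ tri k * q_binomial Q (2*n+1) k * (Q ^ n) ^ (2*n+1-k))"
    unfolding sum_distrib_left
  proof (rule sum.cong)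
    fix k
    assume "k \<in> {..2*n+1}"
    then have "tri k + n * (2*n+1-k) = E + theta_exponent n k"
      unfolding E_def by (intro tri_add_mult_eq_theta_exponent) simp
    then have "Q ^ tri k * (Q ^ n) ^ (2*n+1-k) = Q ^ E * Q ^ theta_exponent n k"
      by (simp only: flip: power_mult power_add)
    then show "Q ^ E * ((-1) ^ k * of_nat k * Q ^ theta_exponent n k * q_binomial Q (2*n+1) k)
        = (-1) ^ k * of_nat k * Q ^ tri k * q_binomial Q (2*n+1) k * (Q ^ n) ^ (2*n+1-k)"
      by (simp add: mult_ac)
  qed simp
  also have "\<dots> = Q ^ E * (- ((-1) ^ n) * q_pochhammer Q n ^ 2)"
    unfolding q_binomial_weighted_alternating_sum
    by (simp add: E_def power_add power2_eq_square mult_ac)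
  finally show ?thesis
    by (simp only: mult_left_cancel[OF power_not_zero[OF assms]])
qed

definition theta_partial :: "'a::comm_ring_1 \<Rightarrow> nat \<Rightarrow> 'a" where
  "theta_partial Q n = (\<Sum>l\<le>n. (-1) ^ l * of_nat (2*l+1) * Q ^ tri (Suc l))"

text \<open>The indices \<open>k\<close> and \<open>2n+1-k\<close> share their exponent; pairing them leaves the
  coefficients \<open>\<plusminus>(2l+1)\<close> of the theta series.\<close>

lemma weighted_alternating_sum_theta_exponent:
  fixes Q :: "'a::comm_ring_1"
  shows "(\<Sum>k\<le>2*n+1. (-1) ^ k * of_nat k * Q ^ theta_exponent n k) = - ((-1) ^ n) * theta_partial Q n"
proof -
  define w where "w k = (-1) ^ k * of_nat k * Q ^ theta_exponent n k" for k
  have "(\<Sum>k\<le>2*n+1. w k) = (\<Sum>k<Suc n. w k) + (\<Sum>i<Suc n. w (Suc n + i))"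
  proof -
    have "{..2*n+1} = {..<Suc n + Suc n}"
      by auto
    then show ?thesis
      by (simp only: sum_lessThan_add)
  qed
  also have "(\<Sum>k<Suc n. w k) = (\<Sum>i<Suc n. w (Suc n - Suc i))"
    by (rule sum.nat_diff_reindex[symmetric])
  also have "(\<Sum>i<Suc n. w (Suc n - Suc i)) + (\<Sum>i<Suc n. w (Suc n + i))
      = (\<Sum>i\<le>n. - ((-1) ^ n) * ((-1) ^ i * of_nat (2*i+1) * Q ^ tri (Suc i)))"
    unfolding sum.distrib[symmetric] lessThan_Suc_atMost
  proof (rule sum.cong)
    fix i
    assume "i \<in> {..n}"
    then obtain d where d: "n = i + d"
      using le_Suc_ex by auto
    have "w (Suc n - Suc i) + w (Suc n + i)
        = (-1) ^ d * (of_nat d - of_nat (Suc n + i)) * Q ^ tri (Suc i)"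
      using d by (simp add: w_def theta_exponent_def power_add algebra_simps)
    also have "\<dots> = - ((-1) ^ n) * ((-1) ^ i * of_nat (2*i+1) * Q ^ tri (Suc i))"
      using d by (simp add: power_add algebra_simps)
    finally show "w (Suc n - Suc i) + w (Suc n + i)
        = - ((-1) ^ n) * ((-1) ^ i * of_nat (2*i+1) * Q ^ tri (Suc i))" .
  qed simp
  finally show ?thesis
    unfolding w_def theta_partial_def sum_distrib_left .
qed

definition fps_cong :: "nat \<Rightarrow> 'a::comm_ring_1 fps \<Rightarrow> 'a fps \<Rightarrow> bool" where
  "fps_cong N f g \<longleftrightarrow> fps_X ^ N dvd f - g"

lemma fps_X_power_dvd_iff: "fps_X ^ N dvd (f :: 'a::comm_ring_1 fps) \<longleftrightarrow> (\<forall>k<N. f $ k = 0)"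
proof
  assume "fps_X ^ N dvd f"
  then show "\<forall>k<N. f $ k = 0"
    by (auto simp: fps_X_power_mult_nth)
next
  assume "\<forall>k<N. f $ k = 0"
  then have "fps_cutoff N f = 0"
    by (simp add: fps_eq_iff)
  then have "f = fps_X ^ N * fps_shift N f"
    using fps_shift_cutoff'[of N f] by simp
  then show "fps_X ^ N dvd f"
    by (metis dvd_triv_left)
qed

lemma fps_cong_iff_nth: "fps_cong N f g \<longleftrightarrow> (\<forall>k<N. f $ k = g $ k)"
  by (simp add: fps_cong_def fps_X_power_dvd_iff)

lemma fps_cong_refl [simp]: "fps_cong N f f"
  by (simp add: fps_cong_def)

lemma fps_cong_sym: "fps_cong N f g \<Longrightarrow> fps_cong N g f"
  by (simp add: fps_cong_iff_nth)

lemma fps_cong_trans [trans]: "fps_cong N f g \<Longrightarrow> fps_cong N g h \<Longrightarrow> fps_cong N f h"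
  by (simp add: fps_cong_iff_nth)

lemma fps_cong_mono: "fps_cong N f g \<Longrightarrow> M \<le> N \<Longrightarrow> fps_cong M f g"
  by (simp add: fps_cong_iff_nth)

lemma fps_cong_mult:
  assumes "fps_cong N f g" and "fps_cong N f' g'"
  shows "fps_cong N (f * f') (g * g')"
proof -
  have "f * f' - g * g' = f * (f' - g') + (f - g) * g'"
    by (simp add: algebra_simps)
  with assms show ?thesis
    unfolding fps_cong_def by (simp add: dvd_add dvd_mult dvd_mult2)
qed

lemma fps_cong_sum:
  "(\<And>k. k \<in> S \<Longrightarrow> fps_cong N (f k) (g k)) \<Longrightarrow> fps_cong N (\<Sum>k\<in>S. f k) (\<Sum>k\<in>S. g k)"
  unfolding fps_cong_def sum_subtractf[symmetric] by (rule dvd_sum)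

lemma fps_cong_shift: "fps_cong M f g \<Longrightarrow> N \<le> M + e \<Longrightarrow> fps_cong N (fps_X ^ e * f) (fps_X ^ e * g)"
  by (auto simp: fps_cong_iff_nth fps_X_power_mult_nth)

lemma fps_cong_cancel:
  fixes f g h :: "'a::field fps"
  assumes "fps_cong N (f * h) (g * h)" and "h $ 0 \<noteq> 0"
  shows "fps_cong N f g"
  using assms unfolding fps_cong_def left_diff_distrib[symmetric]
  by (simp add: dvd_mult_unit_iff)

lemma q_pochhammer_fps_X_nth_0 [simp]: "q_pochhammer (fps_X :: 'a::comm_ring_1 fps) n $ 0 = 1"
  by (induction n) (simp_all add: fps_mult_nth)

lemma q_pochhammer_fps_X_cong:
  assumes "n \<le> m"
  shows "fps_cong (Suc n) (q_pochhammer (fps_X :: 'a::comm_ring_1 fps) m) (q_pochhammer fps_X n)"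
  using assms
proof (induction m rule: dec_induct)
  case base
  then show ?case by simp
next
  case (step k)
  have "fps_cong (Suc n) (1 - fps_X ^ Suc k) (1 :: 'a fps)"
    using step le_imp_power_dvd[of "Suc n" "Suc k" fps_X] by (simp add: fps_cong_def)
  from fps_cong_mult[OF step.IH this] show ?case
    by simp
qed

lemma q_binomial_times_q_pochhammer_cong:
  assumes "k \<le> 2*n+1"
  shows "fps_cong (Suc (min k (2*n+1-k)))
    (q_binomial fps_X (2*n+1) k * q_pochhammer fps_X n) (1 :: 'a::field fps)"
proof -
  define a where "a = max k (2*n+1-k)"
  define b where "b = min k (2*n+1-k)"
  let ?qp = "q_pochhammer (fps_X :: 'a fps)"
  have "b \<le> n" "n \<le> a"
    by (auto simp: a_def b_def)
  have factorization: "q_binomial fps_X (2*n+1) k * ?qp a * ?qp b = ?qp (2*n+1)"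
    using q_binomial_q_pochhammer[OF assms, of fps_X]
    by (cases "k \<le> n") (simp_all add: a_def b_def mult_ac)
  have "fps_cong (Suc b) (q_binomial fps_X (2*n+1) k * ?qp n * ?qp b)
      (q_binomial fps_X (2*n+1) k * ?qp a * ?qp b)"
    using \<open>b \<le> n\<close> \<open>n \<le> a\<close>
    by (intro fps_cong_mult fps_cong_refl fps_cong_mono[OF fps_cong_sym[OF q_pochhammer_fps_X_cong]]) simp_all
  also have "fps_cong (Suc b) (q_binomial fps_X (2*n+1) k * ?qp a * ?qp b) (1 * ?qp b)"
    unfolding factorization using q_pochhammer_fps_X_cong[of b "2*n+1"] \<open>b \<le> n\<close>
    by (simp del: q_pochhammer_Suc)
  finally show ?thesis
    unfolding b_def[symmetric] by (rule fps_cong_cancel) simp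
qed

lemma theta_exponent_plus_min_ge: "n \<le> theta_exponent n k + min k (2*n+1-k)"
  using le_Suc_tri[of "k - n"] le_Suc_tri[of "n + 1 - k"]
  by (auto simp: theta_exponent_def)

lemma q_pochhammer_cube_cong_theta_partial:
  "fps_cong (Suc n) (q_pochhammer fps_X n ^ 3) (theta_partial (fps_X :: 'a::field fps) n)"
proof -
  let ?X = "fps_X :: 'a fps"
  let ?c = "- ((-1) ^ n) :: 'a fps"
  have "fps_cong (Suc n)
      ((\<Sum>k\<le>2*n+1. (-1) ^ k * of_nat k * ?X ^ theta_exponent n k * q_binomial ?X (2*n+1) k) *
        q_pochhammer ?X n)
      (\<Sum>k\<le>2*n+1. (-1) ^ k * of_nat k * ?X ^ theta_exponent n k)"
    unfolding sum_distrib_right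
  proof (rule fps_cong_sum)
    fix k
    assume "k \<in> {..2*n+1}"
    then have "fps_cong (Suc n) (?X ^ theta_exponent n k * (q_binomial ?X (2*n+1) k * q_pochhammer ?X n))
        (?X ^ theta_exponent n k * 1)"
      using theta_exponent_plus_min_ge[of n k]
      by (intro fps_cong_shift[OF q_binomial_times_q_pochhammer_cong]) simp_all
    then have "fps_cong (Suc n)
        ((-1) ^ k * of_nat k * (?X ^ theta_exponent n k * (q_binomial ?X (2*n+1) k * q_pochhammer ?X n)))
        ((-1) ^ k * of_nat k * (?X ^ theta_exponent n k * 1))"
      by (rule fps_cong_mult[OF fps_cong_refl])
    then show "fps_cong (Suc n)
        ((-1) ^ k * of_nat k * ?X ^ theta_exponent n k * q_binomial ?X (2*n+1) k * q_pochhammer ?X n)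
        ((-1) ^ k * of_nat k * ?X ^ theta_exponent n k)"
      by (simp add: mult.assoc)
  qed
  then have "fps_cong (Suc n) (?c * q_pochhammer ?X n ^ 3) (?c * theta_partial ?X n)"
    unfolding q_binomial_weighted_alternating_sum_reduced[OF fps_X_neq_zero]
      weighted_alternating_sum_theta_exponent
    by (simp add: power2_eq_square power3_eq_cube mult.assoc)
  then have "fps_cong (Suc n) (?c * (?c * q_pochhammer ?X n ^ 3)) (?c * (?c * theta_partial ?X n))"
    by (rule fps_cong_mult[OF fps_cong_refl])
  moreover have "?c * (?c * f) = f" for f
    by (simp add: mult.assoc[symmetric] flip: power_mult_distrib)
  ultimately show ?thesis
    by simp
qed

lemma P0_cong_theta_partial: "fps_cong (Suc n) P0 (theta_partial fps_X n)"
  unfolding fps_cong_iff_nth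
proof (intro allI impI)
  fix k
  assume "k < Suc n"
  define p where "p j = (if j * (j - 1) div 2 = k then (-1) ^ (j - 1) * of_nat (2 * j - 1) else (0::rat))"
    for j
  define h where "h l = (if tri (Suc l) = k then (-1) ^ l * of_nat (2*l+1) else (0::rat))" for l
  have "P0 $ k = (\<Sum>j\<in>{Suc 0..Suc k}. p j)"
    by (simp add: P0_def p_def)
  also have "\<dots> = (\<Sum>l\<in>{0..k}. h l)"
    unfolding sum.shift_bounds_cl_Suc_ivl by (rule sum.cong) (simp_all add: p_def h_def tri_eq_div)
  also have "\<dots> = (\<Sum>l\<le>n. h l)"
    using \<open>k < Suc n\<close> le_Suc_tri
    by (intro sum.mono_neutral_left) (auto simp: h_def)
  also have "\<dots> = theta_partial fps_X n $ k"
  proof -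
    have coeff: "((-1) ^ l * of_nat m * fps_X ^ t :: rat fps) $ k =
        (if k = t then (-1) ^ l * of_nat m else 0)" for l m t
      by (simp add: fps_X_power_mult_right_nth minus_one_power_iff)
    show ?thesis
      unfolding theta_partial_def fps_sum_nth h_def coeff by (intro sum.cong) auto
  qed
  finally show "P0 $ k = theta_partial fps_X n $ k" .
qed

lemma P0_cong_q_pochhammer_cube: "fps_cong (Suc n) P0 (q_pochhammer fps_X n ^ 3)"
  using P0_cong_theta_partial q_pochhammer_cube_cong_theta_partial fps_cong_sym fps_cong_trans
  by blast

section \<open>The logarithmic derivative of P0\<close>

lemma fps_XD_mult: "fps_XD (f * g) = fps_XD f * g + f * fps_XD (g :: 'a::comm_ring_1 fps)"
  by (simp add: fps_XD_def algebra_simps)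

definition geometric_X_power :: "nat \<Rightarrow> 'a::comm_ring_1 fps" where
  "geometric_X_power i = Abs_fps (\<lambda>k. if i dvd k then 1 else 0)"

lemma geometric_X_power_nth [simp]: "geometric_X_power i $ k = (if i dvd k then 1 else 0)"
  by (simp add: geometric_X_power_def)

lemma X_power_times_geometric_X_power_nth:
  assumes "0 < i"
  shows "(fps_X ^ i * geometric_X_power i) $ k = (if i dvd k \<and> 0 < k then 1 else (0 :: 'a::comm_ring_1))"
proof (cases "k < i")
  case True
  then show ?thesis
    using assms by (auto simp: fps_X_power_mult_nth dest: dvd_imp_le)
next
  case False
  then have "i dvd (k - i) \<longleftrightarrow> i dvd k"
    by (simp add: dvd_diff_nat dvd_minus_self)
  then show ?thesis
    using False assms by (auto simp: fps_X_power_mult_nth)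
qed

lemma one_minus_X_power_times_geometric_X_power:
  assumes "0 < i"
  shows "(1 - fps_X ^ i) * geometric_X_power i = (1 :: 'a::comm_ring_1 fps)"
proof -
  have expand: "(1 - fps_X ^ i) * geometric_X_power i =
      geometric_X_power i - fps_X ^ i * (geometric_X_power i :: 'a fps)"
    by (simp add: algebra_simps)
  show ?thesis
    unfolding expand
    using assms by (simp add: fps_eq_iff X_power_times_geometric_X_power_nth)
qed

definition lambert_partial :: "nat \<Rightarrow> 'a::comm_ring_1 fps" where
  "lambert_partial N = (\<Sum>i\<in>{1..N}. fps_const (of_nat i) * (fps_X ^ i * geometric_X_power i))"

lemma fps_XD_q_pochhammer:
  "fps_XD (q_pochhammer fps_X N) = - q_pochhammer fps_X N * (lambert_partial N :: 'a::comm_ring_1 fps)"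
proof (induction N)
  case 0
  then show ?case by (simp add: lambert_partial_def fps_eq_iff)
next
  case (Suc N)
  let ?q = "q_pochhammer (fps_X :: 'a fps) N"
  let ?Y = "fps_X ^ Suc N :: 'a fps"
  have inverse: "(1 - ?Y) * geometric_X_power (Suc N) = 1"
    by (rule one_minus_X_power_times_geometric_X_power) simp
  let ?c = "fps_const (of_nat (Suc N)) :: 'a fps"
  have factor: "fps_XD (1 - ?Y) = - (?c * ?Y)"
    by (auto simp: fps_eq_iff simp del: of_nat_Suc)
  have "fps_XD (q_pochhammer fps_X (Suc N)) = - ?q * lambert_partial N * (1 - ?Y) - ?q * ?c * ?Y"
    unfolding q_pochhammer_Suc fps_XD_mult Suc.IH factor by (simp add: algebra_simps)
  also have "\<dots> = - ?q * lambert_partial N * (1 - ?Y)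
      - ?q * ?c * ?Y * ((1 - ?Y) * geometric_X_power (Suc N))"
    unfolding inverse by simp
  also have "\<dots> = - q_pochhammer fps_X (Suc N) * lambert_partial (Suc N)"
    by (simp add: lambert_partial_def algebra_simps)
  finally show ?case .
qed

lemma lambert_partial_cong_A0: "fps_cong (Suc N) (lambert_partial N) (A 0)"
  unfolding fps_cong_iff_nth
proof (intro allI impI)
  fix k
  assume "k < Suc N"
  have "lambert_partial N $ k = (\<Sum>i\<in>{1..N}. if i dvd k \<and> 0 < k then of_nat i else (0::rat))"
    unfolding lambert_partial_def fps_sum_nth
    by (intro sum.cong) (simp_all add: X_power_times_geometric_X_power_nth)
  also have "\<dots> = A 0 $ k"
  proof (cases "k = 0")
    case True
    then show ?thesis by (simp add: A_def)
  next
    case False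
    have "{d. d dvd k} \<subseteq> {1..N}"
    proof
      fix d
      assume "d \<in> {d. d dvd k}"
      then have "d dvd k" by simp
      with False have "d \<noteq> 0" "d \<le> k"
        by (auto intro: dvd_imp_le)
      with \<open>k < Suc N\<close> show "d \<in> {1..N}"
        by simp
    qed
    then have "(\<Sum>i\<in>{1..N}. if i dvd k then of_nat i else (0::rat)) = (\<Sum>i\<in>{d. d dvd k}. of_nat i)"
      by (intro sum.mono_neutral_cong_right) auto
    then show ?thesis
      using False by (simp add: A_def sigma_def)
  qed
  finally show "lambert_partial N $ k = A 0 $ k" .
qed

lemma fps_XD_P0: "fps_XD P0 = - 3 * P0 * A 0"
proof (rule fps_ext)
  fix k
  let ?E = "q_pochhammer fps_X k ^ 3"
  have jacobi: "fps_cong (Suc k) P0 ?E"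
    by (rule P0_cong_q_pochhammer_cube)
  have "fps_XD P0 $ k = of_nat k * ?E $ k"
    using jacobi by (simp add: fps_cong_iff_nth)
  also have "\<dots> = fps_XD ?E $ k"
    by simp
  also have "fps_XD ?E = - 3 * ?E * lambert_partial k"
    by (simp add: power3_eq_cube fps_XD_mult fps_XD_q_pochhammer algebra_simps)
  also have "fps_cong (Suc k) (- 3 * ?E * lambert_partial k) (- 3 * P0 * A 0)"
    by (intro fps_cong_mult fps_cong_refl lambert_partial_cong_A0 fps_cong_sym[OF jacobi])
  then have "(- 3 * ?E * lambert_partial k) $ k = (- 3 * P0 * A 0) $ k"
    by (simp add: fps_cong_iff_nth)
  finally show "fps_XD P0 $ k = (- 3 * P0 * A 0) $ k" .
qed

section \<open>The polynomials P_m\<close>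

lemma fps_XD_A: "fps_XD (A i) = A (Suc i)"
  by (simp add: fps_eq_iff A_def)

lemma poly_in_A_mono: "f \<in> poly_in_A m \<Longrightarrow> m \<le> m' \<Longrightarrow> f \<in> poly_in_A m'"
  by (induction rule: poly_in_A.induct) (auto intro: poly_in_A.intros)

lemma poly_in_A_diff:
  assumes "f \<in> poly_in_A m" and "g \<in> poly_in_A m"
  shows "f - g \<in> poly_in_A m"
proof -
  have "f + fps_const (-1) * g \<in> poly_in_A m"
    using assms by (intro poly_in_A.intros)
  also have "f + fps_const (-1) * g = f - g"
    by (simp flip: fps_const_neg)
  finally show ?thesis .
qed

lemma fps_XD_poly_in_A: "f \<in> poly_in_A m \<Longrightarrow> fps_XD f \<in> poly_in_A (Suc m)"
proof (induction rule: poly_in_A.induct)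
  case (const c)
  have "fps_XD (fps_const c) = fps_const 0"
    by (simp add: fps_eq_iff)
  then show ?case
    by (metis poly_in_A.const)
next
  case (gen i)
  then show ?case
    by (simp add: fps_XD_A poly_in_A.gen)
next
  case (add f g)
  then show ?case
    by (simp add: poly_in_A.add)
next
  case (mult f g)
  then have "f \<in> poly_in_A (Suc m)" "g \<in> poly_in_A (Suc m)"
    by (auto intro: poly_in_A_mono)
  with mult.IH show ?case
    unfolding fps_XD_mult by (intro poly_in_A.add poly_in_A.mult)
qed

fun P_seq :: "nat \<Rightarrow> rat fps" where
  "P_seq 0 = 0"
| "P_seq (Suc 0) = A 0"
| "P_seq (Suc (Suc m)) = Theta (P_seq (Suc m)) - 3 * A 0 * P_seq (Suc m)"

lemma P_seq_Suc: "1 \<le> m \<Longrightarrow> P_seq (Suc m) = Theta (P_seq m) - 3 * A 0 * P_seq m"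
  by (cases m) auto

lemma P_seq_in_poly_in_A: "1 \<le> m \<Longrightarrow> P_seq m \<in> poly_in_A m"
proof (induction m rule: nat_induct_at_least)
  case base
  then show ?case
    by (simp add: poly_in_A.gen)
next
  case (Suc k)
  have "fps_const 3 * A 0 \<in> poly_in_A (Suc k)"
    by (intro poly_in_A.mult poly_in_A.const poly_in_A.gen) simp
  moreover have "P_seq k \<in> poly_in_A (Suc k)"
    using Suc.IH by (rule poly_in_A_mono) simp
  ultimately have "fps_const 3 * A 0 * P_seq k \<in> poly_in_A (Suc k)"
    by (rule poly_in_A.mult)
  with Suc show ?case
    by (simp add: P_seq_Suc numeral_fps_const poly_in_A_diff fps_XD_poly_in_A)
qed

lemma Theta_funpow_P0: "1 \<le> m \<Longrightarrow> (Theta ^^ m) P0 = - 3 * P0 * P_seq m"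
proof (induction m rule: nat_induct_at_least)
  case base
  then show ?case
    by (simp add: fps_XD_P0)
next
  case (Suc k)
  have "(Theta ^^ Suc k) P0 = Theta (fps_const (- 3) * (P0 * P_seq k))"
    using Suc.IH by (simp add: neg_numeral_fps_const mult.assoc)
  also have "\<dots> = fps_const (- 3) * (fps_XD P0 * P_seq k + P0 * fps_XD (P_seq k))"
    by (subst fps_XD_mult_const) (simp only: fps_XD_mult)
  also have "\<dots> = - 3 * P0 * P_seq (Suc k)"
    using Suc.hyps by (simp add: fps_XD_P0 P_seq_Suc algebra_simps flip: neg_numeral_fps_const)
  finally show ?case .
qed

theorem lemma3p1:
  shows "\<exists>P :: nat \<Rightarrow> rat fps.
     P 1 = A 0 \<and>
     (\<forall>m\<ge>1. P (m + 1) = Theta (P m) - 3 * A 0 * P m) \<and>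
     (\<forall>m\<ge>1. (Theta ^^ m) P0 = - 3 * P0 * P m \<and> P m \<in> poly_in_A m)"
  using P_seq_Suc Theta_funpow_P0 P_seq_in_poly_in_A by (intro exI[of _ P_seq]) simp

end
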